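(* Let $\Lambda=\{\lambda_n,\mu_n\}_{n=1}^{\infty}$ belong to the class $ABC$, let $\eta=\sup_n|\arg\lambda_n|$, and let $-\infty<\gamma<\beta<\infty$. Suppose that the Taylor–Dirichlet series \[ f(z)=\sum_{n=1}^{\infty}\Big(\sum_{k=0}^{\mu_n-1}c_{n,k}z^k\Big)e^{\lambda_n z},\qquad c_{n,k}\in\mathbb{C}, \] defines an analytic function in the sector $\Theta_{\eta,\beta}$ (the series converging uniformly on compact subsets of $\Theta_{\eta,\beta}$), and that $f\in L^p(\gamma,\beta)$ for some $p\ge1$. Then $f$ belongs to the closed span of $E_\Lambda$ in $L^p(\gamma,\beta)$.
   Context: A multiplicity sequence $\Lambda=\{\lambda_n,\mu_n\}_{n=1}^\infty$ consists of distinct nonzero complex numbers $\lambda_n$ with $|\lambda_n|\to\infty$, $|\lambda_n|\le|\lambda_{n+1}|$, and positive integers $\mu_n$. $A^0_{|z|}$ is the space of entire functions $F$ with: for every $\epsilon>0$ there is $M_\epsilon$ with $|F(z)|\le M_\epsilon e^{\epsilon|z|}$ on $\mathbb{C}$. $\Lambda$ is an interpolating variety for $A^0_{|z|}$ if for every doubly indexed complex sequence $(a_{n,k})_{n\in\mathbb{N},0\le k\le\mu_n-1}$ with $\sup_n\sum_{k}|a_{n,k}|e^{-\epsilon|\lambda_n|}<\infty$ for every $\epsilon>0$ there is $f\in A^0_{|z|}$ with $f^{(k)}(\lambda_n)/k!=a_{n,k}$ for all $n,k$. $\Lambda\in ABC$ means: (A) $\sum_n\mu_n/|\lambda_n|<\infty$;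 (B) $\sup_n|\arg\lambda_n|<\pi/2$; (C) $\Lambda$ is an interpolating variety for $A^0_{|z|}$. $E_\Lambda=\{x^ke^{\lambda_n x}:n\in\mathbb{N},\ 0\le k\le\mu_n-1\}$. For $\eta\in(0,\pi/2)$, $\Theta_{\eta,\beta}=\{z:\Re z<\beta,\ |\Im z|\le|\Re(z-\beta)|/\tan\eta\}$; for $\eta=0$, $\Theta_{0,\beta}=\{\Re z<\beta\}$. *)

theory Defs
  imports "HOL-Complex_Analysis.Complex_Analysis"
begin

text \<open>Multiplicity sequences are indexed from 0 instead of 1.\<close>

definition multiplicity_seq :: "(nat \<Rightarrow> complex) \<Rightarrow> (nat \<Rightarrow> nat) \<Rightarrow> bool" where
  "multiplicity_seq lam mu \<longleftrightarrow>
     inj lam \<and> (\<forall>n. lam n \<noteq> 0) \<and>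
     filterlim (\<lambda>n. norm (lam n)) at_top sequentially \<and>
     (\<forall>n. norm (lam n) \<le> norm (lam (Suc n))) \<and>
     (\<forall>n. mu n \<ge> 1)"

definition A0 :: "(complex \<Rightarrow> complex) set" where
  "A0 = {F. F holomorphic_on UNIV \<and>
            (\<forall>\<epsilon>>0. \<exists>M. \<forall>z. norm (F z) \<le> M * exp (\<epsilon> * norm z))}"

definition interpolating_variety_A0 :: "(nat \<Rightarrow> complex) \<Rightarrow> (nat \<Rightarrow> nat) \<Rightarrow> bool" where
  "interpolating_variety_A0 lam mu \<longleftrightarrow>
     (\<forall>a :: nat \<Rightarrow> nat \<Rightarrow> complex.
        (\<forall>\<epsilon>>0. \<exists>C. \<forall>n. (\<Sum>k<mu n. norm (a n k)) * exp (- \<epsilon> * norm (lam n)) \<le> C)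
        \<longrightarrow> (\<exists>F\<in>A0. \<forall>n k. k < mu n \<longrightarrow> (deriv ^^ k) F (lam n) / of_nat (fact k) = a n k))"

definition class_ABC :: "(nat \<Rightarrow> complex) \<Rightarrow> (nat \<Rightarrow> nat) \<Rightarrow> bool" where
  "class_ABC lam mu \<longleftrightarrow>
     multiplicity_seq lam mu \<and>
     summable (\<lambda>n. real (mu n) / norm (lam n)) \<and>
     (\<exists>\<theta><pi/2. \<forall>n. \<bar>Arg (lam n)\<bar> \<le> \<theta>) \<and>
     interpolating_variety_A0 lam mu"

definition Theta :: "real \<Rightarrow> real \<Rightarrow> complex set" where
  "Theta \<eta> \<beta> = (if \<eta> = 0 then {z. Re z < \<beta>}
     else {z. Re z < \<beta> \<and> \<bar>Im z\<bar> \<le> \<bar>Re (z - of_real \<beta>)\<bar> / tan \<eta>})"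

definition TD_partial :: "(nat \<Rightarrow> complex) \<Rightarrow> (nat \<Rightarrow> nat) \<Rightarrow> (nat \<Rightarrow> nat \<Rightarrow> complex)
      \<Rightarrow> nat \<Rightarrow> complex \<Rightarrow> complex" where
  "TD_partial lam mu c N z = (\<Sum>n<N. (\<Sum>k<mu n. c n k * z ^ k) * exp (lam n * z))"

definition in_Lp :: "real \<Rightarrow> real \<Rightarrow> real \<Rightarrow> (real \<Rightarrow> complex) \<Rightarrow> bool" where
  "in_Lp p \<gamma> \<beta> g \<longleftrightarrow>
     set_borel_measurable lborel {\<gamma><..<\<beta>} g \<and>
     set_integrable lborel {\<gamma><..<\<beta>} (\<lambda>x. norm (g x) powr p)"

definition in_closed_span_E :: "(nat \<Rightarrow> complex) \<Rightarrow> (nat \<Rightarrow> nat) \<Rightarrow> real \<Rightarrow> real \<Rightarrow> real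
      \<Rightarrow> (real \<Rightarrow> complex) \<Rightarrow> bool" where
  "in_closed_span_E lam mu p \<gamma> \<beta> g \<longleftrightarrow>
     (\<forall>\<epsilon>>0. \<exists>N (d :: nat \<Rightarrow> nat \<Rightarrow> complex).
        (LINT x:{\<gamma><..<\<beta>}|lborel.
            norm (g x - (\<Sum>n<N. \<Sum>k<mu n. d n k * of_real x ^ k * exp (lam n * of_real x))) powr p)
        < \<epsilon>)"

end

theory Submission
  imports Defs
begin

text \<open>Only the real axis matters. Since \<open>\<eta> < pi/2\<close>, the half-line \<open>x < \<beta>\<close> lies in the sector,
  so for every \<open>\<delta> > 0\<close> the partial sums converge uniformly on \<open>[\<gamma> - \<delta>, \<beta> - \<delta>]\<close>. Hence the
  translate \<open>f(x - \<delta>)\<close> is a uniform limit on \<open>(\<gamma>, \<beta>)\<close> of the translated partial sums, and these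
  are again finite combinations of the \<open>x\<^sup>k e\<^bsup>\<lambda>\<^sub>n x\<^esup>\<close>: the factor \<open>e\<^bsup>-\<lambda>\<^sub>n \<delta>\<^esup>\<close> is a constant
  and \<open>(x - \<delta>)\<^sup>k\<close> re-expands in powers of \<open>x\<close> of degree \<open>< \<mu>\<^sub>n\<close>. It remains that
  \<open>f(\<cdot> - \<delta>) \<rightarrow> f\<close> in \<open>L\<^sup>p(\<gamma>, \<beta>)\<close>: \<open>f\<close> is continuous on \<open>x < \<beta>\<close> as a locally uniform limit, so
  the translate is uniformly close to \<open>f\<close> away from \<open>\<beta>\<close>, while near \<open>\<beta>\<close> both have small
  \<open>L\<^sup>p\<close> mass.\<close>

lemma sum_lessThan_atMost_swap:
  fixes f :: "nat \<Rightarrow> nat \<Rightarrow> 'a::comm_monoid_add"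
  shows "(\<Sum>k<m. \<Sum>j\<le>k. f k j) = (\<Sum>j<m. \<Sum>k=j..<m. f k j)"
proof (induction m)
  case (Suc m)
  have "(\<Sum>j<Suc m. \<Sum>k=j..<Suc m. f k j) = (\<Sum>j<Suc m. (\<Sum>k=j..<m. f k j) + f m j)"
    by (intro sum.cong) auto
  also have "\<dots> = (\<Sum>j<m. \<Sum>k=j..<m. f k j) + (\<Sum>j\<le>m. f m j)"
    by (simp add: sum.distrib lessThan_Suc_atMost[symmetric])
  finally show ?case using Suc by simp
qed simp

lemma sum_poly_shift:
  fixes c :: "nat \<Rightarrow> 'a::comm_ring_1"
  shows "(\<Sum>k<m. c k * (z - w)^k) = (\<Sum>j<m. (\<Sum>k=j..<m. c k * of_nat (k choose j) * (-w)^(k-j)) * z^j)"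
proof -
  have "(z - w)^k = (\<Sum>j\<le>k. of_nat (k choose j) * z^j * (-w)^(k-j))" for k
    using binomial_ring[of z "-w" k] by simp
  then have "(\<Sum>k<m. c k * (z - w)^k) = (\<Sum>k<m. \<Sum>j\<le>k. c k * of_nat (k choose j) * (-w)^(k-j) * z^j)"
    by (simp add: sum_distrib_left mult_ac)
  also have "\<dots> = (\<Sum>j<m. (\<Sum>k=j..<m. c k * of_nat (k choose j) * (-w)^(k-j)) * z^j)"
    by (simp add: sum_lessThan_atMost_swap sum_distrib_right)
  finally show ?thesis .
qed

lemma TD_partial_shift:
  "TD_partial lam mu c N (z - w) =
     TD_partial lam mu
       (\<lambda>n k. exp (- (lam n * w)) * (\<Sum>j=k..<mu n. c n j * of_nat (j choose k) * (-w)^(j-k))) N z"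
  unfolding TD_partial_def sum_poly_shift
proof (intro sum.cong refl)
  fix n
  have "exp (lam n * (z - w)) = exp (- (lam n * w)) * exp (lam n * z)"
    by (simp add: right_diff_distrib flip: exp_add)
  then show "(\<Sum>j<mu n. (\<Sum>k=j..<mu n. c n k * of_nat (k choose j) * (-w)^(k-j)) * z^j) * exp (lam n * (z - w)) =
      (\<Sum>k<mu n. exp (- (lam n * w)) * (\<Sum>j=k..<mu n. c n j * of_nat (j choose k) * (-w)^(j-k)) * z^k) * exp (lam n * z)"
    by (simp add: sum_distrib_left sum_distrib_right mult_ac)
qed

lemma class_ABC_Sup_Arg_bounds:
  assumes "class_ABC lam mu"
  shows "0 \<le> (SUP n. \<bar>Arg (lam n)\<bar>)" "(SUP n. \<bar>Arg (lam n)\<bar>) < pi/2"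
proof -
  obtain \<theta> where \<theta>: "\<theta> < pi/2" "\<And>n. \<bar>Arg (lam n)\<bar> \<le> \<theta>"
    using assms unfolding class_ABC_def by blast
  have "bdd_above (range (\<lambda>n. \<bar>Arg (lam n)\<bar>))"
    using \<theta>(2) by (intro bdd_aboveI) auto
  then have "\<bar>Arg (lam 0)\<bar> \<le> (SUP n. \<bar>Arg (lam n)\<bar>)"
    by (rule cSUP_upper[rotated]) simp
  then show "0 \<le> (SUP n. \<bar>Arg (lam n)\<bar>)" by linarith
  have "(SUP n. \<bar>Arg (lam n)\<bar>) \<le> \<theta>"
    using \<theta>(2) by (intro cSUP_least) auto
  with \<theta>(1) show "(SUP n. \<bar>Arg (lam n)\<bar>) < pi/2" by linarith
qed

lemma of_real_in_Theta:
  assumes "0 \<le> \<eta>" "\<eta> < pi/2" "x < \<beta>"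
  shows "complex_of_real x \<in> Theta \<eta> \<beta>"
proof (cases "\<eta> = 0")
  case False
  with assms have "0 < tan \<eta>" by (intro tan_gt_zero) auto
  with assms False show ?thesis by (simp add: Theta_def)
qed (use assms in \<open>simp add: Theta_def\<close>)

lemma continuous_on_if_uniform_limit_on_compacts:
  fixes f :: "'a::heine_borel \<Rightarrow> 'b::metric_space"
  assumes "open S" and cont: "\<And>n. continuous_on S (F n)"
    and lim: "\<And>K. compact K \<Longrightarrow> K \<subseteq> S \<Longrightarrow> uniform_limit K F f sequentially"
  shows "continuous_on S f"
proof -
  have "isCont f x" if "x \<in> S" for x
  proof -
    obtain r where "0 < r" "cball x r \<subseteq> S"
      using \<open>open S\<close> \<open>x \<in> S\<close> open_contains_cball by blast
    then have "continuous_on (cball x r) f"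
      by (intro uniform_limit_theorem[OF _ lim] always_eventually allI)
        (auto intro: continuous_on_subset[OF cont])
    moreover have "x \<in> interior (cball x r)"
      using \<open>0 < r\<close> by (meson ball_subset_cball centre_in_ball interior_maximal open_ball subsetD)
    ultimately show ?thesis by (rule continuous_on_interior)
  qed
  then show ?thesis by (simp add: continuous_at_imp_continuous_on)
qed

lemma set_integral_Ioo_tail_small:
  fixes G :: "real \<Rightarrow> 'a::{banach, second_countable_topology}"
  assumes int: "set_integrable lborel {\<gamma><..<\<beta>} G" and "\<gamma> < \<beta>" "0 < e"
  obtains a where "\<gamma> < a" "a < \<beta>" "norm (LINT x:{a<..<\<beta>}|lborel. G x) < e"
proof -
  define a where "a n = \<beta> - (\<beta> - \<gamma>) / (real n + 1)" for n :: nat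
  have "a 0 = \<gamma>" by (simp add: a_def)
  have a: "\<gamma> < a (Suc n)" "a n < \<beta>" for n
    using \<open>\<gamma> < \<beta>\<close> mult_right_mono[of \<gamma> \<beta> "real n"] by (auto simp: a_def field_simps)
  have "mono a"
    using \<open>\<gamma> < \<beta>\<close> by (auto intro!: monoI frac_le simp: a_def)
  then have "decseq (\<lambda>n. {a n<..<\<beta>})"
    by (auto simp: decseq_def mono_def) (meson le_less_trans)
  moreover have "(\<Inter>n. {a n<..<\<beta>}) = {}"
  proof -
    have "\<exists>n. x \<le> a n" if "x < \<beta>" for x
    proof -
      obtain n where "(\<beta> - \<gamma>) / (\<beta> - x) < real n + 1"
        using reals_Archimedean2 by (metis add.commute add_strict_increasing zero_less_one less_le)
      with that have "x \<le> a n" by (simp add: a_def field_simps)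
      then show ?thesis ..
    qed
    then show ?thesis by (force simp: not_less[symmetric])
  qed
  ultimately have "(\<lambda>n. LINT x:{a n<..<\<beta>}|lborel. G x) \<longlonglongrightarrow> (LINT x:{}|lborel. G x)"
    using set_integral_cont_down[of "\<lambda>n. {a n<..<\<beta>}" lborel G] int \<open>a 0 = \<gamma>\<close> by simp
  also have "(LINT x:{}|lborel. G x) = 0"
    by (simp add: set_lebesgue_integral_def)
  finally have "(\<lambda>n. LINT x:{a n<..<\<beta>}|lborel. G x) \<longlonglongrightarrow> 0" .
  then have "\<forall>\<^sub>F n in sequentially. norm (LINT x:{a n<..<\<beta>}|lborel. G x) < e"
    using \<open>0 < e\<close> by (rule order_tendstoD(2)[OF tendsto_norm_zero])
  then obtain n where "norm (LINT x:{a (Suc n)<..<\<beta>}|lborel. G x) < e"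
    unfolding eventually_sequentially by (meson le_SucI order_refl)
  with a show thesis by (rule that)
qed

lemma powr_le_3_powr_sum:
  fixes s u v w p :: real
  assumes "0 \<le> s" "0 \<le> u" "0 \<le> v" "0 \<le> w" "0 \<le> p" "s \<le> u + v + w"
  shows "s powr p \<le> 3 powr p * (u powr p + v powr p + w powr p)"
proof -
  define m where "m = max u (max v w)"
  have "s powr p \<le> (3 * m) powr p"
    using assms by (intro powr_mono2) (auto simp: m_def)
  also have "\<dots> = 3 powr p * m powr p"
    using assms by (simp add: powr_mult m_def)
  also have "m powr p \<le> u powr p + v powr p + w powr p"
    using assms by (auto simp: m_def max_def)
  finally show ?thesis by simp
qed

lemma set_integral_le_const_plus_shifted:
  fixes h I :: "real \<Rightarrow> real"
  assumes "\<gamma> < \<beta>" and I_int: "integrable lborel I" and I_nonneg: "\<And>x. 0 \<le> I x"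
    and "0 \<le> C" "0 \<le> K"
    and h: "\<And>x. \<gamma> < x \<Longrightarrow> x < \<beta> \<Longrightarrow> h x \<le> C + K * (I x + I (x - \<delta>))"
  shows "(LINT x:{\<gamma><..<\<beta>}|lborel. h x) \<le> C * (\<beta> - \<gamma>) + 2 * K * integral\<^sup>L lborel I"
proof -
  define B where "B x = indicator {\<gamma><..<\<beta>} x * C + K * (I x + I (x - \<delta>))" for x
  have I_shift: "integrable lborel (\<lambda>x. I (x - \<delta>))" "(\<integral>x. I (x - \<delta>) \<partial>lborel) = integral\<^sup>L lborel I"
    using lborel_integrable_real_affine_iff[of 1 I "-\<delta>"] lborel_integral_real_affine[of 1 I "-\<delta>"] I_int
    by simp_all
  have interval_int: "integrable lborel (\<lambda>x. indicator {\<gamma><..<\<beta>} x * C)"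
    using \<open>\<gamma> < \<beta>\<close> by (simp add: integrable_indicator_iff emeasure_lborel_Ioo)
  have "(LINT x:{\<gamma><..<\<beta>}|lborel. h x) \<le> integral\<^sup>L lborel B"
    unfolding set_lebesgue_integral_def
    using I_int I_shift interval_int h I_nonneg \<open>0 \<le> C\<close> \<open>0 \<le> K\<close>
    by (intro integral_mono_AE' AE_I2) (simp_all add: B_def split: split_indicator)
  also have "integral\<^sup>L lborel B = C * (\<beta> - \<gamma>) + 2 * K * integral\<^sup>L lborel I"
    using I_int I_shift interval_int \<open>\<gamma> < \<beta>\<close> by (simp add: B_def[abs_def] algebra_simps)
  finally show ?thesis .
qed

lemma powr_norm_diff_le_of_dist:
  fixes u v t :: "'a::real_normed_vector"
  assumes p: "1 \<le> p" and \<eta>: "0 < \<eta>" "\<eta> \<le> 1/2" and tv: "dist t v < \<eta>"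
  shows "dist v u < \<eta> \<Longrightarrow> norm (u - t) powr p \<le> 2 * \<eta>"
    and "norm (u - t) powr p \<le> 3 powr p * (norm u powr p + norm v powr p + \<eta>)"
proof -
  assume "dist v u < \<eta>"
  with tv have "norm (u - t) \<le> 2 * \<eta>"
    by (smt (verit) dist_commute dist_norm dist_triangle)
  then have "norm (u - t) powr p \<le> (2 * \<eta>) powr p"
    using p by (intro powr_mono2) auto
  also have "\<dots> \<le> 2 * \<eta>"
    using \<eta> p by (intro powr_le_one_le) auto
  finally show "norm (u - t) powr p \<le> 2 * \<eta>" .
next
  have "norm (u - t) \<le> norm u + norm v + \<eta>"
    using tv norm_triangle_ineq4[of u t] norm_triangle_ineq2[of t v] by (simp add: dist_norm)
  then have "norm (u - t) powr p \<le> 3 powr p * (norm u powr p + norm v powr p + \<eta> powr p)"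
    using p \<eta> by (intro powr_le_3_powr_sum) auto
  moreover have "\<eta> powr p \<le> \<eta>"
    using \<eta> p by (intro powr_le_one_le) auto
  ultimately show "norm (u - t) powr p \<le> 3 powr p * (norm u powr p + norm v powr p + \<eta>)"
    by (smt (verit) mult_left_mono powr_ge_zero)
qed

lemma set_integral_norm_diff_powr_le:
  fixes g T :: "real \<Rightarrow> 'a::real_normed_vector"
  assumes p: "1 \<le> p" and abc: "\<gamma> < a" "a < b" "b < \<beta>" and \<delta>: "0 \<le> \<delta>" "\<delta> \<le> b - a"
    and \<eta>: "0 < \<eta>" "\<eta> \<le> 1/2"
    and int: "set_integrable lborel {\<gamma><..<\<beta>} (\<lambda>x. norm (g x) powr p)"
    and close: "\<And>x. \<gamma> < x \<Longrightarrow> x < \<beta> \<Longrightarrow> dist (T x) (g (x - \<delta>)) < \<eta>"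
    and shift: "\<And>x. \<gamma> < x \<Longrightarrow> x \<le> b \<Longrightarrow> dist (g (x - \<delta>)) (g x) < \<eta>"
  shows "(LINT x:{\<gamma><..<\<beta>}|lborel. norm (g x - T x) powr p)
    \<le> (2 + 3 powr p) * \<eta> * (\<beta> - \<gamma>) + 2 * 3 powr p * (LINT x:{a<..<\<beta>}|lborel. norm (g x) powr p)"
proof -
  define K where "K = 3 powr p"
  define I where "I x = indicator {a<..<\<beta>} x * norm (g x) powr p" for x
  have K: "1 \<le> K"
    unfolding K_def using p by (intro ge_one_powr_ge_zero) auto
  have I_nonneg: "0 \<le> I x" for x
    by (simp add: I_def)
  have "set_integrable lborel {a<..<\<beta>} (\<lambda>x. norm (g x) powr p)"
    by (rule set_integrable_subset[OF int]) (use abc in auto)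
  then have I_int: "integrable lborel I"
    unfolding I_def set_integrable_def by simp
  have bound: "norm (g x - T x) powr p \<le> (2 + K) * \<eta> + K * (I x + I (x - \<delta>))"
    if "\<gamma> < x" "x < \<beta>" for x
  proof (cases "x \<le> b")
    case True
    have "norm (g x - T x) powr p \<le> 2 * \<eta>"
      using powr_norm_diff_le_of_dist(1)[OF p \<eta> close[OF that] shift[OF that(1) True]] .
    moreover have "0 \<le> K * \<eta> + K * (I x + I (x - \<delta>))"
      using K \<eta> I_nonneg[of x] I_nonneg[of "x - \<delta>"] by simp
    ultimately show ?thesis
      by (simp add: distrib_right)
  next
    case False
    have "norm (g x - T x) powr p \<le> K * (norm (g x) powr p + norm (g (x - \<delta>)) powr p + \<eta>)"
      unfolding K_def by (rule powr_norm_diff_le_of_dist(2)[OF p \<eta> close[OF that]])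
    moreover have "I x = norm (g x) powr p" "I (x - \<delta>) = norm (g (x - \<delta>)) powr p"
      using False that abc \<delta> by (auto simp: I_def)
    ultimately show ?thesis
      using \<eta> by (simp add: algebra_simps)
  qed
  have "(LINT x:{\<gamma><..<\<beta>}|lborel. norm (g x - T x) powr p) \<le> (2 + K) * \<eta> * (\<beta> - \<gamma>) + 2 * K * integral\<^sup>L lborel I"
    using abc K \<eta> by (intro set_integral_le_const_plus_shifted[OF _ I_int I_nonneg _ _ bound]) auto
  then show ?thesis
    by (simp add: K_def I_def[abs_def] set_lebesgue_integral_def)
qed

lemma Lp_close_if_uniformly_close_to_shift:
  fixes g :: "real \<Rightarrow> 'a::real_normed_vector"
  assumes p: "1 \<le> p" and "c < \<gamma>" "\<gamma> < \<beta>"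
    and cont: "continuous_on {c..<\<beta>} g"
    and int: "set_integrable lborel {\<gamma><..<\<beta>} (\<lambda>x. norm (g x) powr p)"
    and "0 < \<epsilon>"
  obtains \<delta> \<eta> where "0 < \<delta>" "0 < \<eta>"
    "\<And>T. (\<And>x. \<gamma> < x \<Longrightarrow> x < \<beta> \<Longrightarrow> dist (T x) (g (x - \<delta>)) < \<eta>) \<Longrightarrow>
       (LINT x:{\<gamma><..<\<beta>}|lborel. norm (g x - T x) powr p) < \<epsilon>"
proof -
  define K where "K = 3 powr p"
  have K: "1 \<le> K"
    unfolding K_def using p by (intro ge_one_powr_ge_zero) auto
  have "0 < \<epsilon> / (4 * K)"
    using \<open>0 < \<epsilon>\<close> K by simp
  then obtain a where a: "\<gamma> < a" "a < \<beta>"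
    and tail: "norm (LINT x:{a<..<\<beta>}|lborel. norm (g x) powr p) < \<epsilon> / (4 * K)"
    by (rule set_integral_Ioo_tail_small[OF int \<open>\<gamma> < \<beta>\<close>])
  define b where "b = (a + \<beta>) / 2"
  have b: "a < b" "b < \<beta>"
    using a by (auto simp: b_def)
  define \<eta> where "\<eta> = min (1/2) (\<epsilon> / (2 * (2 + K) * (\<beta> - \<gamma>)))"
  have D: "0 < 2 * (2 + K) * (\<beta> - \<gamma>)"
    using K \<open>\<gamma> < \<beta>\<close> by simp
  have \<eta>: "0 < \<eta>" "\<eta> \<le> 1/2" "\<eta> \<le> \<epsilon> / (2 * (2 + K) * (\<beta> - \<gamma>))"
    using \<open>0 < \<epsilon>\<close> D unfolding \<eta>_def by (auto simp: min_def)
  have "uniformly_continuous_on {c..b} g"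
    using b by (intro compact_uniformly_continuous continuous_on_subset[OF cont]) auto
  then obtain \<rho> where "0 < \<rho>"
    and \<rho>: "\<And>x y. x \<in> {c..b} \<Longrightarrow> y \<in> {c..b} \<Longrightarrow> dist y x < \<rho> \<Longrightarrow> dist (g y) (g x) < \<eta>"
    unfolding uniformly_continuous_on_def using \<eta>(1) by metis
  define \<delta> where "\<delta> = min \<rho> (min (\<gamma> - c) (b - a)) / 2"
  have \<delta>: "0 < \<delta>" "\<delta> < \<rho>" "\<delta> \<le> \<gamma> - c" "\<delta> \<le> b - a"
    using \<open>0 < \<rho>\<close> \<open>c < \<gamma>\<close> b by (auto simp: \<delta>_def)
  have shift: "dist (g (x - \<delta>)) (g x) < \<eta>" if "\<gamma> < x" "x \<le> b" for x
    using \<rho>[of x "x - \<delta>"] that \<delta> by (simp add: dist_real_def)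
  show thesis
  proof (rule that[OF \<delta>(1) \<eta>(1)])
    fix T assume "\<And>x. \<gamma> < x \<Longrightarrow> x < \<beta> \<Longrightarrow> dist (T x) (g (x - \<delta>)) < \<eta>"
    then have "(LINT x:{\<gamma><..<\<beta>}|lborel. norm (g x - T x) powr p)
        \<le> (2 + K) * \<eta> * (\<beta> - \<gamma>) + 2 * K * (LINT x:{a<..<\<beta>}|lborel. norm (g x) powr p)"
      unfolding K_def using p a b \<delta> \<eta> int shift by (intro set_integral_norm_diff_powr_le) auto
    also have "\<dots> < \<epsilon>"
      using \<eta>(3) D tail K by (simp add: field_simps abs_less_iff)
    finally show "(LINT x:{\<gamma><..<\<beta>}|lborel. norm (g x - T x) powr p) < \<epsilon>" .
  qed
qed

lemma in_closed_span_E_if_uniform_limit_on_real_axis: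
  fixes g :: "real \<Rightarrow> complex"
  assumes p: "1 \<le> p" and "\<gamma> < \<beta>"
    and lim: "\<And>K. compact K \<Longrightarrow> K \<subseteq> {..<\<beta>} \<Longrightarrow>
      uniform_limit K (\<lambda>N x. TD_partial lam mu c N (of_real x)) g sequentially"
    and int: "set_integrable lborel {\<gamma><..<\<beta>} (\<lambda>x. norm (g x) powr p)"
  shows "in_closed_span_E lam mu p \<gamma> \<beta> g"
  unfolding in_closed_span_E_def
proof (intro allI impI)
  fix \<epsilon> :: real assume "0 < \<epsilon>"
  have "continuous_on {..<\<beta>} g"
    by (rule continuous_on_if_uniform_limit_on_compacts[OF _ _ lim])
      (auto simp: TD_partial_def intro!: continuous_intros)
  then have "continuous_on {\<gamma> - 1..<\<beta>} g"
    by (rule continuous_on_subset) auto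
  then obtain \<delta> \<eta> where "0 < \<delta>" "0 < \<eta>" and approx:
    "\<And>T. (\<And>x. \<gamma> < x \<Longrightarrow> x < \<beta> \<Longrightarrow> dist (T x) (g (x - \<delta>)) < \<eta>) \<Longrightarrow>
       (LINT x:{\<gamma><..<\<beta>}|lborel. norm (g x - T x) powr p) < \<epsilon>"
    using Lp_close_if_uniformly_close_to_shift[where c = "\<gamma> - 1", OF p _ \<open>\<gamma> < \<beta>\<close> _ int \<open>0 < \<epsilon>\<close>]
    by auto
  have "uniform_limit {\<gamma> - \<delta>..\<beta> - \<delta>} (\<lambda>N x. TD_partial lam mu c N (of_real x)) g sequentially"
    using \<open>0 < \<delta>\<close> by (intro lim) auto
  then have "\<forall>\<^sub>F N in sequentially. \<forall>x\<in>{\<gamma> - \<delta>..\<beta> - \<delta>}. dist (TD_partial lam mu c N (of_real x)) (g x) < \<eta>"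
    using \<open>0 < \<eta>\<close> by (rule uniform_limitD)
  then obtain N where N: "\<And>x. x \<in> {\<gamma> - \<delta>..\<beta> - \<delta>} \<Longrightarrow> dist (TD_partial lam mu c N (of_real x)) (g x) < \<eta>"
    unfolding eventually_sequentially by blast
  define d where "d n k = exp (- (lam n * \<delta>)) * (\<Sum>j=k..<mu n. c n j * of_nat (j choose k) * (- \<delta>)^(j-k))"
    for n k
  have "TD_partial lam mu d N (of_real x) = TD_partial lam mu c N (of_real (x - \<delta>))" for x
    unfolding d_def by (simp add: TD_partial_shift)
  then have "dist (TD_partial lam mu d N (of_real x)) (g (x - \<delta>)) < \<eta>" if "\<gamma> < x" "x < \<beta>" for x
    using N[of "x - \<delta>"] that by simp
  then have "(LINT x:{\<gamma><..<\<beta>}|lborel. norm (g x - TD_partial lam mu d N (of_real x)) powr p) < \<epsilon>"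
    by (rule approx)
  then show "\<exists>N d. (LINT x:{\<gamma><..<\<beta>}|lborel. norm (g x - (\<Sum>n<N. \<Sum>k<mu n.
      d n k * of_real x ^ k * exp (lam n * of_real x))) powr p) < \<epsilon>"
    unfolding TD_partial_def by (auto simp: sum_distrib_right)
qed

theorem theorem1p3:
  fixes lam :: "nat \<Rightarrow> complex" and mu :: "nat \<Rightarrow> nat"
    and c :: "nat \<Rightarrow> nat \<Rightarrow> complex" and f :: "complex \<Rightarrow> complex"
    and \<gamma> \<beta> p :: real
  assumes ABC: "class_ABC lam mu"
    and gb: "\<gamma> < \<beta>"
    and conv: "\<forall>K. compact K \<and> K \<subseteq> Theta (SUP n. \<bar>Arg (lam n)\<bar>) \<beta> \<longrightarrow>
                 uniform_limit K (TD_partial lam mu c) f sequentially"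
    and hol: "f holomorphic_on interior (Theta (SUP n. \<bar>Arg (lam n)\<bar>) \<beta>)"
    and p: "p \<ge> 1"
    and Lp: "in_Lp p \<gamma> \<beta> (\<lambda>x. f (of_real x))"
  shows "in_closed_span_E lam mu p \<gamma> \<beta> (\<lambda>x. f (of_real x))"
proof (rule in_closed_span_E_if_uniform_limit_on_real_axis[OF p gb])
  fix K :: "real set" assume "compact K" "K \<subseteq> {..<\<beta>}"
  then have "of_real ` K \<subseteq> Theta (SUP n. \<bar>Arg (lam n)\<bar>) \<beta>"
    using of_real_in_Theta class_ABC_Sup_Arg_bounds[OF ABC] by auto
  moreover have "compact (complex_of_real ` K)"
    using \<open>compact K\<close> by (intro compact_continuous_image continuous_intros)
  ultimately have "uniform_limit (of_real ` K) (TD_partial lam mu c) f sequentially"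
    using conv by blast
  then show "uniform_limit K (\<lambda>N x. TD_partial lam mu c N (of_real x)) (\<lambda>x. f (of_real x)) sequentially"
    by (rule uniform_limit_compose') auto
qed (use Lp in \<open>simp add: in_Lp_def\<close>)

end
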